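(* Let $d\geq 2$ and let $g:[-1,1]\to(-\infty,\infty]$ be a function that is finite and continuous on $[-1,1)$, differentiable on $(-1,1)$, with $g(1)=\lim_{t\to1^-}g(t)$, and such that $g''$ exists and is convex on $(-1,1)$. Let $\widetilde\omega_{2d}=\{\pm\mathbf e_1,\ldots,\pm\mathbf e_d\}$, where $\mathbf e_1,\dots,\mathbf e_d$ is the standard basis of $\mathbb R^d$. Then the potential $$p^g(\widetilde\omega_{2d},\mathbf x):=\sum_{\mathbf y\in\widetilde\omega_{2d}}g(\mathbf x\cdot\mathbf y)$$ attains its absolute minimum over $S^{d-1}$ at every point of $S^{d-1}$ each of whose coordinates equals $1/\sqrt d$ or $-1/\sqrt d$. Furthermore, $$P^g(\widetilde\omega_{2d},S^{d-1}):=\min_{\mathbf x\in S^{d-1}}p^g(\widetilde\omega_{2d},\mathbf x)=d\left(g\left(\tfrac1{\sqrt d}\right)+g\left(-\tfrac1{\sqrt d}\right)\right).$$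
   Context: $S^{d-1}$ is the unit sphere in $\mathbb R^d$. *)

theory Defs
  imports "HOL-Analysis.Analysis" "HOL-Library.Extended_Real"
begin

definition cross_polytope :: "(real ^ 'n) set" where
  "cross_polytope = {axis i 1 | i. True} \<union> {axis i (-1) | i. True}"

definition potential :: "(real \<Rightarrow> ereal) \<Rightarrow> (real ^ 'n) set \<Rightarrow> real ^ 'n \<Rightarrow> ereal" where
  "potential g \<omega> x = (\<Sum>y\<in>\<omega>. g (x \<bullet> y))"

end

theory Submission
  imports Defs
begin

text \<open>
  The potential of the cross-polytope splits over the coordinates as
  \<open>\<Sum>\<^sub>i H(x\<^sub>i)\<close> with the even function \<open>H(t) = g(t) + g(-t)\<close>. Since \<open>H''(t) = g''(t) + g''(-t)\<close>
  is even and convex, it is nondecreasing on \<open>[0,1)\<close>; hence \<open>H'(t)/t\<close> is nondecreasing there,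
  and for \<open>a = 1/\<surd>d\<close> the function \<open>H(t) - c t\<^sup>2\<close> with \<open>c = H'(a)/(2a)\<close> is minimal at
  \<open>t = \<plusminus>a\<close>. So \<open>H\<close> lies above the quadratic \<open>H(a) + c (t\<^sup>2 - a\<^sup>2)\<close>, which touches it at \<open>\<plusminus>a\<close>.
  On the sphere \<open>\<Sum>\<^sub>i x\<^sub>i\<^sup>2 = 1 = d a\<^sup>2\<close>, so summing the quadratic over the coordinates gives
  the lower bound \<open>d H(a)\<close>, attained when every \<open>|x\<^sub>i| = a\<close>.
\<close>

lemma convex_on_even_part_mono:
  fixes f :: "real \<Rightarrow> real"
  assumes conv: "convex_on A f" and A: "s \<in> A" "-s \<in> A" and "0 \<le> t" "t \<le> s"
  shows "f t + f (-t) \<le> f s + f (-s)"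
proof (cases "s = 0")
  case True
  then show ?thesis using assms by simp
next
  case False
  then have s0: "s > 0" using assms by simp
  define l where "l = (s + t) / (2 * s)"
  have l: "0 \<le> l" "l \<le> 1" using assms s0 by (auto simp: l_def field_simps)
  have t: "t = (1 - l) * (-s) + l * s" "-t = (1 - l) * s + l * (-s)"
    using s0 by (simp_all add: l_def field_simps)
  have "f ((1 - l) * (-s) + l * s) \<le> (1 - l) * f (-s) + l * f s"
    and "f ((1 - l) * s + l * (-s)) \<le> (1 - l) * f s + l * f (-s)"
    using convex_onD[OF conv, of l "-s" s] convex_onD[OF conv, of l s "-s"] l A by simp_all
  then have "f t \<le> (1 - l) * f (-s) + l * f s" "f (-t) \<le> (1 - l) * f s + l * f (-s)"
    unfolding t[symmetric] .
  then show ?thesis by (simp add: algebra_simps)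
qed

lemma mono_derivative_imp_slope_from_0_mono:
  fixes h h' :: "real \<Rightarrow> real"
  assumes deriv: "\<And>t. 0 \<le> t \<Longrightarrow> t < r \<Longrightarrow> (h has_real_derivative h' t) (at t)"
    and mono: "\<And>t s. 0 \<le> t \<Longrightarrow> t \<le> s \<Longrightarrow> s < r \<Longrightarrow> h' t \<le> h' s"
    and h0: "h 0 = 0" and "0 < s" "s \<le> t" "t < r"
  shows "h s / s \<le> h t / t"
proof (rule DERIV_nonneg_imp_nondecreasing[OF \<open>s \<le> t\<close>])
  fix x assume "s \<le> x" "x \<le> t"
  then have x: "0 < x" "x < r" using assms by auto
  obtain z where z: "0 < z" "z < x" "h x - h 0 = (x - 0) * h' z"
    using MVT2[of 0 x h h'] x deriv by auto
  have "h x \<le> x * h' x"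
    using z h0 mono[of z x] x by (simp add: mult_left_mono)
  then have "0 \<le> (h' x * x - h x) / x\<^sup>2"
    by (simp add: algebra_simps)
  moreover have "((\<lambda>x. h x / x) has_real_derivative (h' x * x - h x) / x\<^sup>2) (at x)"
    using deriv[of x] x by (auto intro!: derivative_eq_intros simp: power2_eq_square)
  ultimately show "\<exists>y. ((\<lambda>x. h x / x) has_real_derivative y) (at x) \<and> 0 \<le> y"
    by blast
qed

lemma even_quadratic_minorant:
  fixes H H' H'' :: "real \<Rightarrow> real"
  assumes even: "\<And>t. H (-t) = H t"
    and dH: "\<And>t. 0 \<le> t \<Longrightarrow> t < r \<Longrightarrow> (H has_real_derivative H' t) (at t)"
    and dH': "\<And>t. 0 \<le> t \<Longrightarrow> t < r \<Longrightarrow> (H' has_real_derivative H'' t) (at t)"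
    and mono: "\<And>t s. 0 \<le> t \<Longrightarrow> t \<le> s \<Longrightarrow> s < r \<Longrightarrow> H'' t \<le> H'' s"
    and a: "0 < a" "a < r" and t: "\<bar>t\<bar> < r"
  shows "H a + H' a / (2 * a) * (t\<^sup>2 - a\<^sup>2) \<le> H t"
proof -
  define c where "c = H' a / (2 * a)"
  define \<psi> where "\<psi> t = H t - c * t\<^sup>2" for t
  have "H' 0 = - H' 0"
  proof (rule DERIV_unique)
    show "(H has_real_derivative H' 0) (at 0)" using dH a by simp
    show "(H has_real_derivative - H' 0) (at 0)"
      using DERIV_mirror[where f = H and x = 0 and y = "H' 0"] dH[of 0] a by (simp add: even)
  qed
  then have H'0: "H' 0 = 0" by simp
  have slope: "H' s / s \<le> H' u / u" if "0 < s" "s \<le> u" "u < r" for s u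
    using mono_derivative_imp_slope_from_0_mono[OF dH' mono H'0 that] .
  have d\<psi>: "(\<psi> has_real_derivative H' x - 2 * c * x) (at x)" if "0 \<le> x" "x < r" for x
    unfolding \<psi>_def[abs_def] using dH[OF that] by (auto intro!: derivative_eq_intros)
  have d\<psi>_eq: "H' x - 2 * c * x = x * (H' x / x - H' a / a)" if "0 < x" for x
    using that a by (simp add: c_def field_simps)
  have \<psi>_min: "\<psi> a \<le> \<psi> u" if u: "0 \<le> u" "u < r" for u
  proof (cases "u \<le> a")
    case True
    show ?thesis
    proof (rule DERIV_nonpos_imp_nonincreasing[OF True])
      fix x assume x: "u \<le> x" "x \<le> a"
      have "H' x - 2 * c * x \<le> 0"
        using H'0 d\<psi>_eq[of x] slope[of x a] x u a
        by (cases "x = 0") (auto simp: mult_nonneg_nonpos)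
      then show "\<exists>y. (\<psi> has_real_derivative y) (at x) \<and> y \<le> 0"
        using d\<psi>[of x] x u a by auto
    qed
  next
    case False
    show ?thesis
    proof (rule DERIV_nonneg_imp_nondecreasing[of a u])
      show "a \<le> u" using False by simp
    next
      fix x assume x: "a \<le> x" "x \<le> u"
      have "0 \<le> H' x - 2 * c * x"
        using d\<psi>_eq[of x] slope[of a x] x u a by simp
      then show "\<exists>y. (\<psi> has_real_derivative y) (at x) \<and> 0 \<le> y"
        using d\<psi>[of x] x u a by auto
    qed
  qed
  have "\<psi> \<bar>t\<bar> = \<psi> t"
    by (cases "t \<ge> 0") (simp_all add: \<psi>_def even)
  then have "\<psi> a \<le> \<psi> t" using \<psi>_min[of "\<bar>t\<bar>"] t by simp
  then show ?thesis by (simp add: \<psi>_def c_def algebra_simps)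
qed

lemma convex_second_derivative_pair_minorant:
  fixes G g' g'' :: "real \<Rightarrow> real"
  assumes D: "\<forall>t\<in>{-r<..<r}. (G has_real_derivative g' t) (at t) \<and> (g' has_real_derivative g'' t) (at t)"
    and conv: "convex_on {-r<..<r} g''"
    and a: "0 < a" "a < r" and t: "t \<in> {-r<..<r}"
  shows "G a + G (-a) + (g' a - g' (-a)) / (2 * a) * (t\<^sup>2 - a\<^sup>2) \<le> G t + G (-t)"
proof -
  have mirror: "((\<lambda>x. f (-x)) has_real_derivative - f' (-x)) (at x)"
    if "(f has_real_derivative f' (-x)) (at (-x))" for f f' :: "real \<Rightarrow> real" and x
    using DERIV_mirror[where f = f and x = x and y = "f' (-x)"] that by simp
  show ?thesis
  proof (rule even_quadratic_minorant[where H = "\<lambda>t. G t + G (-t)"])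
    fix x :: real assume "0 \<le> x" "x < r"
    then have "x \<in> {-r<..<r}" "-x \<in> {-r<..<r}" by auto
    then show "((\<lambda>t. G t + G (-t)) has_real_derivative g' x - g' (-x)) (at x)"
      and "((\<lambda>t. g' t - g' (-t)) has_real_derivative g'' x + g'' (-x)) (at x)"
      using D mirror[of G g' x] mirror[of g' g'' x]
      by (auto intro!: derivative_eq_intros)
  next
    fix x s :: real assume "0 \<le> x" "x \<le> s" "s < r"
    then show "g'' x + g'' (-x) \<le> g'' s + g'' (-s)"
      by (intro convex_on_even_part_mono[OF conv]) auto
  qed (use a t in auto)
qed

lemma ereal_pair_minorant_at_endpoints:
  fixes g :: "real \<Rightarrow> ereal" and G L :: "real \<Rightarrow> real"
  assumes fin: "\<And>t. t \<in> {-1..<1} \<Longrightarrow> g t = ereal (G t)"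
    and cont: "continuous_on {-1..<1} G"
    and g1: "(g \<longlongrightarrow> g 1) (at_left 1)"
    and L: "isCont L 1" "\<And>t. L (-t) = L t"
    and inner: "\<And>t. t \<in> {-1<..<1} \<Longrightarrow> ereal (L t) \<le> g t + g (-t)"
    and t: "t \<in> {-1..1}"
  shows "ereal (L t) \<le> g t + g (-t)"
proof -
  have edge: "ereal (L 1) \<le> g 1 + g (-1)"
  proof -
    have "((\<lambda>t. G (-t)) \<longlongrightarrow> G (-1)) (at 1 within {0..1})"
    proof -
      have "continuous_on {0..1} (\<lambda>t. G (-t))"
        by (rule continuous_on_compose2[OF cont]) (auto intro!: continuous_intros)
      then show ?thesis by (simp add: continuous_on_def)
    qed
    moreover have "at (1::real) within {0..1} = at_left 1"
      by (rule at_within_Icc_at_left) simp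
    ultimately have "((\<lambda>t. G (-t)) \<longlongrightarrow> G (-1)) (at_left 1)"
      by simp
    moreover have "(L \<longlongrightarrow> L 1) (at_left 1)"
      using L(1) unfolding isCont_def filterlim_at_split by blast
    ultimately have "((\<lambda>t. ereal (L t - G (-t))) \<longlongrightarrow> ereal (L 1 - G (-1))) (at_left 1)"
      by (intro tendsto_intros)
    moreover have "eventually (\<lambda>t. ereal (L t - G (-t)) \<le> g t) (at_left 1)"
    proof (rule eventually_mono[OF eventually_at_left_real[of 0 1]])
      fix t :: real assume t: "t \<in> {0<..<1}"
      then show "ereal (L t - G (-t)) \<le> g t"
        using inner[of t] fin[of t] fin[of "-t"] by simp
    qed simp
    ultimately have "ereal (L 1 - G (-1)) \<le> g 1"
      by (rule tendsto_le[OF trivial_limit_at_left_real g1])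
    then show ?thesis using fin[of "-1"] by (cases "g 1") auto
  qed
  consider "t = 1" | "t = -1" | "t \<in> {-1<..<1}" using t by fastforce
  then show ?thesis
  proof cases
    case 2
    then show ?thesis using edge L(2)[of 1] by (simp add: add.commute)
  qed (simp_all add: edge inner)
qed

lemma potential_cross_polytope:
  fixes g :: "real \<Rightarrow> ereal" and x :: "real ^ 'n"
  shows "potential g cross_polytope x = (\<Sum>i\<in>UNIV. g (x $ i) + g (- (x $ i)))"
proof -
  let ?P = "range (\<lambda>i. axis i (1::real))" and ?N = "range (\<lambda>i. axis i (-1::real))"
  have split: "cross_polytope = ?P \<union> ?N" and disjoint: "?P \<inter> ?N = {}"
    by (auto simp: cross_polytope_def axis_eq_axis)
  have "potential g cross_polytope x = (\<Sum>y\<in>?P. g (x \<bullet> y)) + (\<Sum>y\<in>?N. g (x \<bullet> y))"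
    unfolding potential_def split by (rule sum.union_disjoint[OF _ _ disjoint]) simp_all
  also have "\<dots> = (\<Sum>i\<in>UNIV. g (x $ i)) + (\<Sum>i\<in>UNIV. g (- (x $ i)))"
  proof -
    have inj: "inj (\<lambda>i. axis i (1::real))" "inj (\<lambda>i. axis i (-1::real))"
      by (auto simp: inj_on_def axis_eq_axis)
    show ?thesis by (simp add: sum.reindex[OF inj(1)] sum.reindex[OF inj(2)] inner_axis)
  qed
  finally show ?thesis by (simp add: sum.distrib)
qed

lemma potential_cross_polytope_ge_quadratic:
  fixes g :: "real \<Rightarrow> ereal" and z :: "real ^ 'n"
  assumes minorant: "\<And>t. t \<in> {-1..1} \<Longrightarrow> ereal (\<alpha> + \<beta> * t\<^sup>2) \<le> g t + g (-t)"
    and z: "z \<in> sphere 0 1"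
  shows "ereal (real CARD('n) * \<alpha> + \<beta>) \<le> potential g cross_polytope z"
proof -
  have "(\<Sum>i\<in>UNIV. (z $ i)\<^sup>2) = 1"
    using z dot_square_norm[of z] by (simp add: inner_vec_def power2_eq_square)
  then have "real CARD('n) * \<alpha> + \<beta> = (\<Sum>i\<in>UNIV. \<alpha> + \<beta> * (z $ i)\<^sup>2)"
    by (simp add: sum.distrib flip: sum_distrib_left)
  also have "ereal \<dots> \<le> (\<Sum>i\<in>UNIV. g (z $ i) + g (- (z $ i)))"
    unfolding sum_ereal[symmetric]
  proof (rule sum_mono, rule minorant)
    fix i
    show "z $ i \<in> {-1..1}"
      using component_le_norm_cart[of z i] z by (simp add: abs_le_iff)
  qed
  finally show ?thesis by (simp add: potential_cross_polytope)
qed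

lemma potential_cross_polytope_abs_const:
  fixes g :: "real \<Rightarrow> ereal" and x :: "real ^ 'n"
  assumes "\<forall>i. \<bar>x $ i\<bar> = a"
  shows "potential g cross_polytope x = ereal (real CARD('n)) * (g a + g (-a))"
proof -
  have "x $ i = a \<or> x $ i = -a" for i
    using assms by (metis abs_if minus_minus)
  then have "g (x $ i) + g (- (x $ i)) = g a + g (-a)" for i
    by (metis add.commute minus_minus)
  then show ?thesis by (simp add: potential_cross_polytope sum_constant_ereal mult.commute)
qed

lemma const_vector_in_unit_sphere: "(\<chi> i. 1 / sqrt (real CARD('n))) \<in> sphere (0 :: real ^ 'n) 1"
proof -
  have "(\<chi> i. 1 / sqrt (real CARD('n))) \<bullet> (\<chi> i. 1 / sqrt (real CARD('n)) :: real ^ 'n) = 1"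
    by (simp add: inner_vec_def power_divide flip: power2_eq_square)
  then show ?thesis by (simp add: norm_eq_sqrt_inner)
qed

lemma cross_polytope_potential_min_from_quadratic_minorant:
  fixes g :: "real \<Rightarrow> ereal"
  assumes minorant: "\<And>t. t \<in> {-1..1} \<Longrightarrow> ereal (\<alpha> + \<beta> * t\<^sup>2) \<le> g t + g (-t)"
    and touch: "ereal (\<alpha> + \<beta> / real CARD('n)) = g (1 / sqrt CARD('n)) + g (- (1 / sqrt CARD('n)))"
  shows "(\<forall>x::real^'n. (\<forall>i. \<bar>x $ i\<bar> = 1 / sqrt CARD('n)) \<longrightarrow>
            (\<forall>z\<in>sphere (0::real^'n) 1. potential g cross_polytope x \<le> potential g cross_polytope z))
         \<and> (INF z\<in>sphere (0::real^'n) 1. potential g cross_polytope z)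
             = ereal (real CARD('n)) * (g (1 / sqrt CARD('n)) + g (- (1 / sqrt CARD('n))))"
    (is "?minimiser \<and> ?inf")
proof -
  let ?d = "real CARD('n)" and ?a = "1 / sqrt CARD('n)"
  have "ereal (?d * \<alpha> + \<beta>) = ereal ?d * ereal (\<alpha> + \<beta> / ?d)"
    by (simp add: field_simps)
  then have lower: "ereal ?d * (g ?a + g (-?a)) \<le> potential g cross_polytope z"
    if "z \<in> sphere 0 1" for z :: "real ^ 'n"
    using potential_cross_polytope_ge_quadratic[OF minorant that] touch by simp
  have attained: "potential g cross_polytope x = ereal ?d * (g ?a + g (-?a))"
    if "\<forall>i. \<bar>x $ i\<bar> = ?a" for x :: "real ^ 'n"
    using potential_cross_polytope_abs_const[OF that] .
  show ?thesis
  proof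
    show ?minimiser using attained lower by simp
    have "potential g cross_polytope ((\<chi> i. ?a) :: real ^ 'n) = ereal ?d * (g ?a + g (-?a))"
      by (rule attained) simp
    then show ?inf
      using const_vector_in_unit_sphere lower by (metis INF_lower antisym INF_greatest)
  qed
qed

theorem theorem5p1:
  fixes g :: "real \<Rightarrow> ereal"
  assumes d2: "CARD('n::finite) \<ge> 2"
    and no_minf: "\<forall>t\<in>{-1..1}. g t \<noteq> -\<infinity>"
    and finite_g: "\<forall>t\<in>{-1..<1}. g t \<noteq> \<infinity>"
    and cont: "continuous_on {-1..<1} (\<lambda>t. real_of_ereal (g t))"
    and diff: "(\<lambda>t. real_of_ereal (g t)) differentiable_on {-1<..<1}"
    and g1: "(g \<longlongrightarrow> g 1) (at_left 1)"
    and g2: "\<exists>g' g''. (\<forall>t\<in>{-1<..<1}.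
                ((\<lambda>s. real_of_ereal (g s)) has_real_derivative g' t) (at t) \<and>
                (g' has_real_derivative g'' t) (at t))
              \<and> convex_on {-1<..<1} g''"
  shows "(\<forall>x::real^'n. (\<forall>i. \<bar>x $ i\<bar> = 1 / sqrt (real CARD('n))) \<longrightarrow>
            (\<forall>z\<in>sphere (0::real^'n) 1. potential g cross_polytope x \<le> potential g cross_polytope z))
         \<and> (INF z\<in>sphere (0::real^'n) 1. potential g cross_polytope z)
             = ereal (real CARD('n)) * (g (1 / sqrt (real CARD('n))) + g (- 1 / sqrt (real CARD('n))))"
proof -
  \<comment> \<open>\<open>diff\<close> is implied by \<open>g2\<close> and not needed.\<close>
  define G where "G t = real_of_ereal (g t)" for t
  define a where "a = 1 / sqrt CARD('n)"
  obtain g' g'' where D: "\<forall>t\<in>{-1<..<1}. (G has_real_derivative g' t) (at t) \<and> (g' has_real_derivative g'' t) (at t)"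
    and conv: "convex_on {-1<..<1} g''"
    using g2 unfolding G_def[abs_def] by blast
  define c where "c = (g' a - g' (-a)) / (2 * a)"
  have a: "0 < a" "a < 1" and a2: "a\<^sup>2 = 1 / CARD('n)"
    using d2 by (simp_all add: a_def power_divide)
  have fin: "g t = ereal (G t)" if "t \<in> {-1..<1}" for t
    using no_minf finite_g that unfolding G_def by (cases "g t") auto
  have minorant: "ereal ((G a + G (-a) - c * a\<^sup>2) + c * t\<^sup>2) \<le> g t + g (-t)" if "t \<in> {-1..1}" for t
  proof (rule ereal_pair_minorant_at_endpoints[OF fin _ g1 _ _ _ that])
    show "continuous_on {-1..<1} G" using cont unfolding G_def[abs_def] .
    fix t :: real assume t: "t \<in> {-1<..<1}"
    then have "G a + G (-a) + c * (t\<^sup>2 - a\<^sup>2) \<le> G t + G (-t)"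
      unfolding c_def by (rule convex_second_derivative_pair_minorant[OF D conv a])
    then show "ereal (G a + G (-a) - c * a\<^sup>2 + c * t\<^sup>2) \<le> g t + g (-t)"
      using fin[of t] fin[of "-t"] t by (simp add: algebra_simps)
  qed (auto intro!: continuous_intros)
  have "ereal ((G a + G (-a) - c * a\<^sup>2) + c / CARD('n)) = g a + g (-a)"
    using fin[of a] fin[of "-a"] a a2 by simp
  from cross_polytope_potential_min_from_quadratic_minorant[OF minorant[unfolded a_def] this[unfolded a_def]]
  show ?thesis by simp
qed

end
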